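(* Let $J=(a,b)\subseteq\mathbb R$ be an open interval (possibly unbounded) and let $A:J\to\mathbb R$ be differentiable with $|A'(x)-A'(y)|\le M|x-y|$ for all $x,y\in J$, for some constant $M>0$. Then $\bigl|\mathtt S[\mathrm{Im}K_\Gamma](\mathbf z)\bigr|\le\left(8+\frac32\right)M^2$ for every three-tuple $\mathbf z$ of distinct points on $\Gamma=\{x+iA(x):x\in J\}$.
   Context: $s(x)=\sqrt{1+(A'(x))^2}$. The kernel (normalizing factor $1/(2\pi)$ omitted) is $K_\Gamma(w,z)=\dfrac{A'(x)-i}{s(x)\,[\,x-y+i(A(x)-A(y))\,]}$ for $w=x+iA(x)$, $z=y+iA(y)$, $x\neq y$; $\mathrm{Im}K_\Gamma$ is its imaginary part. For a real-valued $K$ and distinct $z_1,z_2,z_3$, $\mathtt S[K](\mathbf z)=\sum_{\sigma\in S_3}K(z_{\sigma(1)},z_{\sigma(2)})K(z_{\sigma(1)},z_{\sigma(3)})$, $S_3$ the permutation group on three elements. *)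

theory Defs
  imports "HOL-Analysis.Analysis" "HOL-Combinatorics.Permutations"
begin

definition graph_curve :: "(real \<Rightarrow> real) \<Rightarrow> real set \<Rightarrow> complex set" where
  "graph_curve A J = {Complex x (A x) | x. x \<in> J}"

definition sfun :: "(real \<Rightarrow> real) \<Rightarrow> real \<Rightarrow> real" where
  "sfun A x = sqrt (1 + (deriv A x)\<^sup>2)"

text \<open>Kernel K_Gamma(w,z) for w = x + i A(x), z = y + i A(y) (so x = Re w, y = Re z),
  normalizing factor 1/(2 pi) omitted.\<close>
definition KGamma :: "(real \<Rightarrow> real) \<Rightarrow> complex \<Rightarrow> complex \<Rightarrow> complex" where
  "KGamma A w z =
     (let x = Re w; y = Re z in
       (complex_of_real (deriv A x) - \<i>) /
       (complex_of_real (sfun A x) *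
        (complex_of_real (x - y) + \<i> * complex_of_real (A x - A y))))"

definition Ssym :: "(complex \<Rightarrow> complex \<Rightarrow> real) \<Rightarrow> (nat \<Rightarrow> complex) \<Rightarrow> real" where
  "Ssym K z = (\<Sum>\<sigma> \<in> {\<sigma>. \<sigma> permutes {1,2,3::nat}}.
       K (z (\<sigma> 1)) (z (\<sigma> 2)) * K (z (\<sigma> 1)) (z (\<sigma> 3)))"

end

theory Submission
  imports Defs
begin

text \<open>
  Take points x1 < x2 < x3 of J, put h1 = x2 - x1, h2 = x3 - x2, and let m, n, q be the slopes
  of the chords over [x1, x2], [x2, x3], [x1, x3], so that (h1 + h2) q = h1 m + h2 n.
  Writing A'(x) = tan \<theta> and m = tan \<alpha>, one has Im K(x, y) = - cos(\<theta> - \<alpha>) cos \<alpha> / (x - y),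
  and the product-to-sum formula splits S into two second divided differences: one of a
  function of the chord slopes alone, equal to 2 ((n - m) / (h1 + h2))^2 / ((1 + m^2) (1 + q^2) (1 + n^2))
  and hence in [0, 2 M^2], and one that vanishes identically once all three tangent slopes
  are replaced by A'(x2). By the mean value theorem each tangent slope lies within M h of the
  adjacent chord slopes, so undoing that replacement at x1 and at x3 costs at most 2 M^2 each.
  Hence |S| \<le> 6 M^2, which is better than claimed.
\<close>

text \<open>Im K(w, z) for the tangent slope p = A'(Re w) and w - z = U + i V.\<close>
definition im_kernel :: "real \<Rightarrow> real \<Rightarrow> real \<Rightarrow> real" where
  "im_kernel p U V = - (U + p*V) / (sqrt (1 + p^2) * (U^2 + V^2))"

text \<open>
  With p = tan \<theta>, m = tan \<alpha>, q = tan \<beta> these are cos(\<alpha> - \<beta>) cos \<alpha> cos \<beta> and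
  cos(2\<theta> - \<alpha> - \<beta>) cos \<alpha> cos \<beta>; lemma im_kernel_mult is the product-to-sum formula for
  cos(\<theta> - \<alpha>) cos(\<theta> - \<beta>).
\<close>
definition angle_cos_diff :: "real \<Rightarrow> real \<Rightarrow> real" where
  "angle_cos_diff m q = (1 + m*q) / ((1 + m^2) * (1 + q^2))"

definition angle_cos_sum :: "real \<Rightarrow> real \<Rightarrow> real \<Rightarrow> real" where
  "angle_cos_sum p m q =
     ((1 - p^2) * (1 - m*q) + 2*p*(m + q)) / ((1 + p^2) * (1 + m^2) * (1 + q^2))"

lemma one_plus_square_pos [simp]: "0 < 1 + x^2" for x :: real
  by (simp add: add_pos_nonneg)

lemma one_plus_square_nonzero [simp]: "1 + x^2 \<noteq> 0" for x :: real
  using one_plus_square_pos[of x] by linarith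

lemma im_kernel_chord:
  assumes "U \<noteq> 0"
  shows "im_kernel p U (U*m) = - (1 + p*m) / (sqrt (1 + p^2) * (1 + m^2) * U)"
proof -
  have "U^2 + (U*m)^2 = U * ((1 + m^2) * U)"
    by (simp add: power2_eq_square algebra_simps)
  then have "im_kernel p U (U*m) = (U * - (1 + p*m)) / (U * (sqrt (1 + p^2) * (1 + m^2) * U))"
    unfolding im_kernel_def by (simp add: algebra_simps)
  with assms show ?thesis
    by simp
qed

lemma im_kernel_mult:
  assumes "U \<noteq> 0" "U' \<noteq> 0"
  shows "im_kernel p U (U*m) * im_kernel p U' (U'*q) =
    (angle_cos_diff m q + angle_cos_sum p m q) / (U * U') / 2"
proof -
  have "sqrt (1 + p^2) * sqrt (1 + p^2) = 1 + p^2"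
    by simp
  then show ?thesis
    unfolding im_kernel_chord[OF assms(1)] im_kernel_chord[OF assms(2)]
      angle_cos_diff_def angle_cos_sum_def
    using assms by (simp add: divide_simps) algebra
qed

lemma angle_cos_sum_divided_difference:
  assumes "h1 > 0" "h2 > 0" "(h1 + h2) * q = h1*m + h2*n"
  shows "angle_cos_sum p m q / (h1 * (h1 + h2)) - angle_cos_sum p m n / (h1 * h2)
       + angle_cos_sum p q n / ((h1 + h2) * h2) = 0"
  unfolding angle_cos_sum_def
  using assms by (simp add: divide_simps) algebra

lemma angle_cos_diff_divided_difference:
  assumes "h1 > 0" "h2 > 0" "(h1 + h2) * q = h1*m + h2*n"
  shows "angle_cos_diff m q / (h1 * (h1 + h2)) - angle_cos_diff m n / (h1 * h2)
       + angle_cos_diff q n / ((h1 + h2) * h2)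
     = 2 * ((n - m) / (h1 + h2))^2 / ((1 + m^2) * (1 + q^2) * (1 + n^2))"
  unfolding angle_cos_diff_def
  using assms by (simp add: divide_simps) algebra

lemma angle_cos_sum_diff:
  "angle_cos_sum a m q - angle_cos_sum b m q =
     2 * (b - a) * ((1 + a*m) * (b - q) + (a - m) * (1 + b*q))
     / ((1 + a^2) * (1 + b^2) * (1 + m^2) * (1 + q^2))"
  unfolding angle_cos_sum_def
  by (simp add: divide_simps) algebra

lemma abs_one_plus_mult_le: "\<bar>1 + a*m\<bar> \<le> (1 + a^2) * (1 + m^2)" for a m :: real
proof -
  have sq: "(1 + a^2) * (1 + m^2) = (1 + a*m)^2 + (a - m)^2"
    by algebra
  have one: "1 \<le> (1 + a^2) * (1 + m^2)"
    by (simp add: mult_ge1_I)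
  show ?thesis
  proof (cases "\<bar>1 + a*m\<bar> \<le> 1")
    case False
    then have "\<bar>1 + a*m\<bar> * 1 \<le> \<bar>1 + a*m\<bar> * \<bar>1 + a*m\<bar>"
      by (intro mult_left_mono) auto
    then have "\<bar>1 + a*m\<bar> \<le> (1 + a*m)^2"
      by (simp add: power2_eq_square abs_mult_self_eq)
    then show ?thesis
      unfolding sq using zero_le_power2[of "a - m"] by linarith
  qed (use one in linarith)
qed

lemma abs_angle_cos_sum_diff_le:
  "\<bar>angle_cos_sum a m q - angle_cos_sum b m q\<bar> \<le> 2 * \<bar>a - b\<bar> * (\<bar>b - q\<bar> + \<bar>a - m\<bar>)"
proof -
  define Dam where "Dam = (1 + a^2) * (1 + m^2)"
  define Dbq where "Dbq = (1 + b^2) * (1 + q^2)"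
  have ge1: "1 \<le> Dam" "1 \<le> Dbq"
    by (simp_all add: Dam_def Dbq_def mult_ge1_I)
  have "\<bar>(1 + a*m) * (b - q) + (a - m) * (1 + b*q)\<bar> \<le> \<bar>1 + a*m\<bar> * \<bar>b - q\<bar> + \<bar>1 + b*q\<bar> * \<bar>a - m\<bar>"
    by (metis abs_mult abs_triangle_ineq mult.commute)
  also have "\<dots> \<le> Dam * \<bar>b - q\<bar> + Dbq * \<bar>a - m\<bar>"
    unfolding Dam_def Dbq_def by (intro add_mono mult_right_mono abs_one_plus_mult_le) auto
  also have "\<dots> \<le> Dam * Dbq * (\<bar>b - q\<bar> + \<bar>a - m\<bar>)"
    unfolding distrib_left using ge1 by (intro add_mono mult_right_mono) simp_all
  finally have N: "\<bar>(1 + a*m) * (b - q) + (a - m) * (1 + b*q)\<bar> \<le> Dam * Dbq * (\<bar>b - q\<bar> + \<bar>a - m\<bar>)" .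
  have "\<bar>angle_cos_sum a m q - angle_cos_sum b m q\<bar>
      = 2 * \<bar>a - b\<bar> * \<bar>(1 + a*m) * (b - q) + (a - m) * (1 + b*q)\<bar> / (Dam * Dbq)"
    unfolding angle_cos_sum_diff abs_divide abs_mult Dam_def Dbq_def
    by (simp add: abs_minus_commute mult.assoc)
  also have "\<dots> \<le> 2 * \<bar>a - b\<bar> * (Dam * Dbq * (\<bar>b - q\<bar> + \<bar>a - m\<bar>)) / (Dam * Dbq)"
    using ge1 by (intro divide_right_mono mult_left_mono N) auto
  also have "\<dots> = 2 * \<bar>a - b\<bar> * (\<bar>b - q\<bar> + \<bar>a - m\<bar>)"
    using ge1 by simp
  finally show ?thesis .
qed

lemma three_point_slope_sum_le:
  fixes h1 h2 m n q p1 p2 p3 M :: real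
  assumes h1: "h1 > 0" and h2: "h2 > 0" and q: "(h1 + h2) * q = h1*m + h2*n" and "M \<ge> 0"
    and dev1: "\<bar>p1 - m\<bar> + \<bar>p2 - m\<bar> \<le> M * h1" and dev2: "\<bar>p2 - n\<bar> + \<bar>p3 - n\<bar> \<le> M * h2"
  shows "\<bar>(angle_cos_diff m q + angle_cos_sum p1 m q) / (h1 * (h1 + h2))
          - (angle_cos_diff m n + angle_cos_sum p2 m n) / (h1 * h2)
          + (angle_cos_diff q n + angle_cos_sum p3 q n) / ((h1 + h2) * h2)\<bar> \<le> 6 * M^2"
proof -
  define H where "H = h1 + h2"
  have H: "H > 0"
    using h1 h2 by (simp add: H_def)
  define F where "F = angle_cos_diff m q / (h1 * H) - angle_cos_diff m n / (h1 * h2)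
    + angle_cos_diff q n / (H * h2)"
  have decomposition: "(angle_cos_diff m q + angle_cos_sum p1 m q) / (h1 * H)
          - (angle_cos_diff m n + angle_cos_sum p2 m n) / (h1 * h2)
          + (angle_cos_diff q n + angle_cos_sum p3 q n) / (H * h2)
    = F + (angle_cos_sum p1 m q - angle_cos_sum p2 m q) / (h1 * H)
        + (angle_cos_sum p3 q n - angle_cos_sum p2 q n) / (H * h2)"
    using angle_cos_sum_divided_difference[OF h1 h2 q, of p2]
    by (simp add: F_def H_def add_divide_distrib diff_divide_distrib algebra_simps)
  define s where "s = (n - m) / H"
  have s: "\<bar>s\<bar> \<le> M"
    using dev1 dev2 H by (simp add: s_def H_def abs_divide divide_le_eq algebra_simps)
  have qm: "\<bar>q - m\<bar> \<le> M * h2" and qn: "\<bar>q - n\<bar> \<le> M * h1"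
  proof -
    have "q - m = h2 * s" "q - n = - h1 * s"
      using q H by (simp_all add: s_def H_def field_simps)
    then show "\<bar>q - m\<bar> \<le> M * h2" "\<bar>q - n\<bar> \<le> M * h1"
      using s h1 h2 by (simp_all add: abs_mult mult_left_mono mult.commute[of M])
  qed
  have F: "0 \<le> F \<and> F \<le> 2 * M^2"
  proof -
    define P where "P = (1 + m^2) * (1 + q^2) * (1 + n^2)"
    have P: "1 \<le> P"
      by (simp add: P_def mult_ge1_I)
    have "F = 2 * s^2 / P"
      using angle_cos_diff_divided_difference[OF h1 h2 q] by (simp add: F_def H_def P_def s_def)
    moreover have "s^2 \<le> M^2"
      using s \<open>M \<ge> 0\<close> by (simp add: abs_le_square_iff[symmetric])
    ultimately show ?thesis
      using P frac_le[of "2 * M^2" "2 * s^2" 1 P] by simp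
  qed
  have T: "\<bar>(angle_cos_sum a m' q' - angle_cos_sum b m' q') / (h * H)\<bar> \<le> 2 * M^2"
    if h: "h > 0" and ab: "\<bar>a - b\<bar> \<le> M * h" and dev: "\<bar>b - q'\<bar> + \<bar>a - m'\<bar> \<le> M * H"
    for a b h m' q'
  proof -
    have "2 * \<bar>a - b\<bar> * (\<bar>b - q'\<bar> + \<bar>a - m'\<bar>) \<le> 2 * (M * h) * (M * H)"
      using ab dev \<open>M \<ge> 0\<close> h by (intro mult_mono) auto
    then have "\<bar>angle_cos_sum a m' q' - angle_cos_sum b m' q'\<bar> \<le> 2 * (M * h) * (M * H)"
      using abs_angle_cos_sum_diff_le[of a m' q' b] by linarith
    then show ?thesis
      using h H by (simp add: abs_divide abs_mult divide_le_eq power2_eq_square ac_simps)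
  qed
  have "\<bar>(angle_cos_sum p1 m q - angle_cos_sum p2 m q) / (h1 * H)\<bar> \<le> 2 * M^2"
    using h1 dev1 qm by (intro T) (auto simp: H_def distrib_left)
  moreover have "\<bar>(angle_cos_sum p3 q n - angle_cos_sum p2 q n) / (H * h2)\<bar> \<le> 2 * M^2"
    using T[of h2 p3 p2 n q] h2 dev2 qn by (auto simp: H_def distrib_left mult.commute)
  ultimately show ?thesis
    using F decomposition unfolding H_def by (simp only: abs_le_iff) linarith
qed

definition chord_slope :: "(real \<Rightarrow> real) \<Rightarrow> real \<Rightarrow> real \<Rightarrow> real" where
  "chord_slope A u v = (A v - A u) / (v - u)"

definition chord_deviation :: "(real \<Rightarrow> real) \<Rightarrow> (real \<Rightarrow> real) \<Rightarrow> real \<Rightarrow> real \<Rightarrow> real" where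
  "chord_deviation A D u v = \<bar>D u - chord_slope A u v\<bar> + \<bar>D v - chord_slope A u v\<bar>"

definition graph_im_kernel :: "(real \<Rightarrow> real) \<Rightarrow> (real \<Rightarrow> real) \<Rightarrow> real \<Rightarrow> real \<Rightarrow> real" where
  "graph_im_kernel A D x y = im_kernel (D x) (x - y) (A x - A y)"

definition sym_triple_sum :: "('a \<Rightarrow> 'a \<Rightarrow> real) \<Rightarrow> 'a \<Rightarrow> 'a \<Rightarrow> 'a \<Rightarrow> real" where
  "sym_triple_sum K a b c = K a b * K a c + K b a * K b c + K c a * K c b"

lemma sym_triple_sum_swap12: "sym_triple_sum K b a c = sym_triple_sum K a b c"
  by (simp add: sym_triple_sum_def ac_simps)

lemma sym_triple_sum_swap23: "sym_triple_sum K a c b = sym_triple_sum K a b c"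
  by (simp add: sym_triple_sum_def ac_simps)

lemma chord_slope_commute: "chord_slope A u v = chord_slope A v u"
  by (metis chord_slope_def minus_diff_eq minus_divide_divide)

lemma chord_slope_mult: "u \<noteq> v \<Longrightarrow> A v - A u = (v - u) * chord_slope A u v"
  by (simp add: chord_slope_def)

lemma graph_im_kernel_mult:
  assumes "x \<noteq> y" "x \<noteq> z"
  shows "graph_im_kernel A D x y * graph_im_kernel A D x z =
    (angle_cos_diff (chord_slope A x y) (chord_slope A x z)
      + angle_cos_sum (D x) (chord_slope A x y) (chord_slope A x z)) / ((x - y) * (x - z)) / 2"
proof -
  have chords: "A x - A y = (x - y) * chord_slope A x y" "A x - A z = (x - z) * chord_slope A x z"
    using assms by (simp_all add: chord_slope_mult chord_slope_commute[of A x])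
  show ?thesis
    unfolding graph_im_kernel_def chords by (intro im_kernel_mult) (use assms in simp_all)
qed

lemma graph_sym_triple_sum_sorted_le:
  assumes x12: "x1 < x2" and x23: "x2 < x3" and "M \<ge> 0"
    and dev12: "chord_deviation A D x1 x2 \<le> M * (x2 - x1)"
    and dev23: "chord_deviation A D x2 x3 \<le> M * (x3 - x2)"
  shows "\<bar>sym_triple_sum (graph_im_kernel A D) x1 x2 x3\<bar> \<le> 3 * M^2"
proof -
  define h1 where "h1 = x2 - x1"
  define h2 where "h2 = x3 - x2"
  define m where "m = chord_slope A x1 x2"
  define n where "n = chord_slope A x2 x3"
  define q where "q = chord_slope A x1 x3"
  have h1: "h1 > 0" and h2: "h2 > 0"
    using x12 x23 by (simp_all add: h1_def h2_def)
  have q_avg: "(h1 + h2) * q = h1 * m + h2 * n"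
    using x12 x23 chord_slope_mult[of x1 x2 A] chord_slope_mult[of x2 x3 A] chord_slope_mult[of x1 x3 A]
    by (simp add: h1_def h2_def m_def n_def q_def)
  have ne: "x1 \<noteq> x2" "x1 \<noteq> x3" "x2 \<noteq> x3"
    using x12 x23 by simp_all
  have d1: "(x1 - x2) * (x1 - x3) = h1 * (h1 + h2)"
    and d2: "(x2 - x1) * (x2 - x3) = - (h1 * h2)"
    and d3: "(x3 - x1) * (x3 - x2) = (h1 + h2) * h2"
    by (simp_all add: h1_def h2_def algebra_simps)
  have K1: "graph_im_kernel A D x1 x2 * graph_im_kernel A D x1 x3
      = (angle_cos_diff m q + angle_cos_sum (D x1) m q) / (h1 * (h1 + h2)) / 2"
    using graph_im_kernel_mult[OF ne(1) ne(2), of A D, unfolded d1]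
    by (simp only: m_def q_def)
  have K2: "graph_im_kernel A D x2 x1 * graph_im_kernel A D x2 x3
      = - ((angle_cos_diff m n + angle_cos_sum (D x2) m n) / (h1 * h2) / 2)"
    using graph_im_kernel_mult[OF ne(1)[symmetric] ne(3), of A D, unfolded d2]
    by (simp add: m_def n_def chord_slope_commute[of A x2 x1])
  have K3: "graph_im_kernel A D x3 x1 * graph_im_kernel A D x3 x2
      = (angle_cos_diff q n + angle_cos_sum (D x3) q n) / ((h1 + h2) * h2) / 2"
    using graph_im_kernel_mult[OF ne(2)[symmetric] ne(3)[symmetric], of A D, unfolded d3]
    by (simp only: q_def n_def chord_slope_commute[of A x3 x1] chord_slope_commute[of A x3 x2])
  have "\<bar>(angle_cos_diff m q + angle_cos_sum (D x1) m q) / (h1 * (h1 + h2))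
      - (angle_cos_diff m n + angle_cos_sum (D x2) m n) / (h1 * h2)
      + (angle_cos_diff q n + angle_cos_sum (D x3) q n) / ((h1 + h2) * h2)\<bar> \<le> 6 * M^2"
    using dev12 dev23 by (intro three_point_slope_sum_le[OF h1 h2 q_avg \<open>M \<ge> 0\<close>])
      (simp_all add: chord_deviation_def m_def n_def h1_def h2_def)
  moreover have halves: "a / 2 + - (b / 2) + c / 2 = (a - b + c) / 2" for a b c :: real
    by simp
  ultimately show ?thesis
    unfolding sym_triple_sum_def K1 K2 K3 halves abs_divide by simp
qed

lemma linorder_three_wlog:
  fixes a b c :: "'a::linorder"
  assumes swap12: "\<And>a b c. P a b c \<Longrightarrow> P b a c" and swap23: "\<And>a b c. P a b c \<Longrightarrow> P a c b"
    and sorted: "\<And>a b c. a < b \<Longrightarrow> b < c \<Longrightarrow> P a b c"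
    and "a \<noteq> b" "b \<noteq> c" "a \<noteq> c"
  shows "P a b c"
  using assms(4-) by (metis linorder_neqE swap12 swap23 sorted)

lemma graph_sym_triple_sum_le:
  assumes dev: "\<And>u v. u \<in> J \<Longrightarrow> v \<in> J \<Longrightarrow> u < v \<Longrightarrow> chord_deviation A D u v \<le> M * (v - u)"
    and "M \<ge> 0" and distinct: "x1 \<noteq> x2" "x2 \<noteq> x3" "x1 \<noteq> x3"
    and in_J: "x1 \<in> J" "x2 \<in> J" "x3 \<in> J"
  shows "\<bar>sym_triple_sum (graph_im_kernel A D) x1 x2 x3\<bar> \<le> 3 * M^2"
proof -
  let ?P = "\<lambda>a b c. a \<in> J \<longrightarrow> b \<in> J \<longrightarrow> c \<in> J \<longrightarrow>
    \<bar>sym_triple_sum (graph_im_kernel A D) a b c\<bar> \<le> 3 * M^2"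
  have "?P x1 x2 x3"
  proof (rule linorder_three_wlog[where P = ?P])
    fix a b c :: real
    assume "a < b" "b < c"
    then show "?P a b c"
      using dev \<open>M \<ge> 0\<close> by (auto intro: graph_sym_triple_sum_sorted_le)
  qed (use distinct in \<open>auto simp: sym_triple_sum_swap12 sym_triple_sum_swap23\<close>)
  with in_J show ?thesis
    by blast
qed

lemma chord_deviation_deriv_le:
  fixes A :: "real \<Rightarrow> real"
  assumes J: "is_interval J"
    and A_diff: "\<forall>x\<in>J. A differentiable (at x)"
    and A_lip: "\<forall>x\<in>J. \<forall>y\<in>J. \<bar>deriv A x - deriv A y\<bar> \<le> M * \<bar>x - y\<bar>"
    and uv: "u \<in> J" "v \<in> J" "u < v"
  shows "chord_deviation A (deriv A) u v \<le> M * (v - u)"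
proof -
  have between: "t \<in> J" if "u \<le> t" "t \<le> v" for t
    using J uv that unfolding is_interval_1 by blast
  then have "\<And>t. u \<le> t \<Longrightarrow> t \<le> v \<Longrightarrow> DERIV A t :> deriv A t"
    using A_diff DERIV_deriv_iff_real_differentiable by blast
  from MVT2[OF \<open>u < v\<close> this] obtain \<xi> where \<xi>: "u < \<xi>" "\<xi> < v" "A v - A u = (v - u) * deriv A \<xi>"
    by blast
  then have "chord_slope A u v = deriv A \<xi>"
    by (simp add: chord_slope_def)
  moreover have "\<bar>deriv A u - deriv A \<xi>\<bar> \<le> M * (\<xi> - u)" "\<bar>deriv A v - deriv A \<xi>\<bar> \<le> M * (v - \<xi>)"
    using A_lip uv between[of \<xi>] \<xi> by (fastforce simp: abs_of_neg abs_of_pos)+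
  ultimately show ?thesis
    by (simp add: chord_deviation_def algebra_simps)
qed

lemma Im_KGamma_graph:
  "Im (KGamma A (Complex x (A x)) (Complex y (A y))) = graph_im_kernel A (deriv A) x y"
proof -
  define s where "s = sqrt (1 + (deriv A x)^2)"
  define p where "p = deriv A x"
  define U where "U = x - y"
  define V where "V = A x - A y"
  have "s > 0"
    by (simp add: s_def)
  have "Im (KGamma A (Complex x (A x)) (Complex y (A y))) = (- (s*U) - p*(s*V)) / ((s*U)^2 + (s*V)^2)"
    unfolding KGamma_def Let_def sfun_def s_def[symmetric] p_def[symmetric] U_def[symmetric] V_def[symmetric]
    by (simp add: Im_divide s_def p_def U_def V_def)
  also have "\<dots> = (s * (-(U + p*V))) / (s * (s*(U^2 + V^2)))"
    by (simp add: algebra_simps power2_eq_square)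
  also have "\<dots> = im_kernel p U V"
    unfolding im_kernel_def using \<open>s > 0\<close> by (simp add: s_def p_def)
  finally show ?thesis
    by (simp add: graph_im_kernel_def p_def U_def V_def)
qed

lemma Ssym_eq_sym_triple_sum: "Ssym K z = 2 * sym_triple_sum K (z 1) (z 2) (z 3)"
proof -
  have "Ssym K z = (\<Sum>b\<in>{1,2,3::nat}. \<Sum>c\<in>{2,3::nat}. \<Sum>d\<in>{3::nat}.
     (\<lambda>\<sigma>. K (z (\<sigma> 1)) (z (\<sigma> 2)) * K (z (\<sigma> 1)) (z (\<sigma> 3)))
       (Transposition.transpose 1 b \<circ> (Transposition.transpose 2 c \<circ> (Transposition.transpose 3 d \<circ> id))))"
    unfolding Ssym_def
    apply (subst sum_over_permutations_insert[of "{2,3}" 1, simplified insert_commute], simp, simp)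
    apply (subst sum_over_permutations_insert[of "{3}" 2], simp, simp)
    apply (subst sum_over_permutations_insert[of "{}" 3], simp, simp)
    apply simp
    done
  then show ?thesis
    by (simp add: Transposition.transpose_def sym_triple_sum_def algebra_simps)
qed

theorem corollary1p6:
  fixes J :: "real set" and A :: "real \<Rightarrow> real" and M :: real and z :: "nat \<Rightarrow> complex"
  assumes J_open: "open J" and J_int: "is_interval J"
    and A_diff: "\<forall>x\<in>J. A differentiable (at x)"
    and M_pos: "M > 0"
    and A_lip: "\<forall>x\<in>J. \<forall>y\<in>J. \<bar>deriv A x - deriv A y\<bar> \<le> M * \<bar>x - y\<bar>"
    and z_on: "\<forall>i\<in>{1,2,3}. z i \<in> graph_curve A J"
    and z_dist: "inj_on z {1,2,3}"
  shows "\<bar>Ssym (\<lambda>w v. Im (KGamma A w v)) z\<bar> \<le> (8 + 3/2) * M\<^sup>2"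
proof -
  define x where "x i = Re (z i)" for i
  have z_graph: "z i = Complex (x i) (A (x i))" "x i \<in> J" if "i \<in> {1,2,3}" for i
    using z_on that unfolding graph_curve_def x_def by auto
  have x_distinct: "x i \<noteq> x j" if "i \<in> {1,2,3}" "j \<in> {1,2,3}" "i \<noteq> j" for i j
    using z_graph[OF that(1)] z_graph[OF that(2)] z_dist that by (metis inj_onD)
  have "Ssym (\<lambda>w v. Im (KGamma A w v)) z
      = 2 * sym_triple_sum (graph_im_kernel A (deriv A)) (x 1) (x 2) (x 3)"
    by (simp add: Ssym_eq_sym_triple_sum sym_triple_sum_def z_graph Im_KGamma_graph)
  moreover have "\<bar>sym_triple_sum (graph_im_kernel A (deriv A)) (x 1) (x 2) (x 3)\<bar> \<le> 3 * M^2"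
    using chord_deviation_deriv_le[OF J_int A_diff A_lip] M_pos x_distinct z_graph
    by (intro graph_sym_triple_sum_le[where J = J]) auto
  ultimately show ?thesis
    by simp
qed

end
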